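(* For Pólya trees $t$ let $k=|t|$ and let $S_t$, $T$ be as in the context. Then \[ \sum_{\substack{t \in \mathcal{P}_{\le n}\\ |t| < \log n}} \left(1 - \frac{[z^n]S_t(z)}{[z^n]T(z)}\right) = \mathcal{O}\!\left(\frac{n}{(\log n)^{3/2}}\right) \quad \text{as } n\to\infty, \] where $\log$ denotes the logarithm to base $1/\sigma$.
   Context: A recursive tree of size $n$ is a rooted non-plane tree with $n$ nodes labeled $1,\dots,n$ with labels increasing along every path from the root; their exponential generating function is $T(z)=\ln\frac{1}{1-z}$, so $[z^n]T(z)=1/n$. A Pólya tree is an unlabeled rooted non-plane tree; $\mathcal{P}_{\le n}$ is the set of Pólya trees with at most $n$ nodes; $\sigma\approx 0.338$ is the radius of convergence of the ordinary generating function of Pólya trees. A fringe subtree is a node together with all its descendants; its shape is the Pólya tree obtained by forgetting labels. For a Pólya tree $t$ with $k$ nodes, $\ell(t)$ is the number of increasing labelings of $t$ by $1,\dots,k$, $w(t)=\ell(t)/k!$ and $P_t(z)=w(t)z^k$. $S_t(z)$ is the exponential generating function of recursive trees having no fringe subtree of shape $t$; it is the solution of $S_t'(z)=\exp(S_t(z))-P_t'(z)$, $S_t(0)=0$, explicitly $S_t(z)=\ln\frac{1}{1-\int_0^z e^{-P_t(v)}\,dv}-P_t(z)$. Thus $1-[z^n]S_t(z)/[z^n]T(z)$ is the probability that a uniformly random recursive tree of size $n$ has a fringe subtree of shape $t$. *)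

theory Defs
  imports "HOL-Analysis.Analysis" "HOL-Library.Multiset" "HOL-Library.Landau_Symbols"
begin

text \<open>Polya trees: unlabeled rooted non-plane trees (children form a multiset).\<close>
datatype ptree = PNode "ptree multiset"

primrec psize :: "ptree \<Rightarrow> nat" where
  "psize (PNode ts) = Suc (sum_mset (image_mset psize ts))"

datatype ltree = LNode nat "ltree multiset"

primrec lsize :: "ltree \<Rightarrow> nat" where
  "lsize (LNode a ts) = Suc (sum_mset (image_mset lsize ts))"

primrec labels :: "ltree \<Rightarrow> nat set" where
  "labels (LNode a ts) = insert a (\<Union> (set_mset (image_mset labels ts)))"

primrec fringe :: "ltree \<Rightarrow> ltree set" where
  "fringe (LNode a ts) = insert (LNode a ts) (\<Union> (set_mset (image_mset fringe ts)))"

primrec shape :: "ltree \<Rightarrow> ptree" where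
  "shape (LNode a ts) = PNode (image_mset shape ts)"

definition lroot :: "ltree \<Rightarrow> nat" where
  "lroot r = (case r of LNode a ts \<Rightarrow> a)"

definition lchildren :: "ltree \<Rightarrow> ltree multiset" where
  "lchildren r = (case r of LNode a ts \<Rightarrow> ts)"

definition increasing :: "ltree \<Rightarrow> bool" where
  "increasing r \<longleftrightarrow> (\<forall>s\<in>fringe r. \<forall>c\<in>#lchildren s. lroot s < lroot c)"

text \<open>Recursive tree of size n: n nodes labeled (bijectively) by 1..n, increasing.\<close>
definition recursive_tree :: "nat \<Rightarrow> ltree \<Rightarrow> bool" where
  "recursive_tree n r \<longleftrightarrow> lsize r = n \<and> labels r = {1..n} \<and> increasing r"

definition has_fringe_shape :: "ptree \<Rightarrow> ltree \<Rightarrow> bool" where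
  "has_fringe_shape t r \<longleftrightarrow> (\<exists>s\<in>fringe r. shape s = t)"

definition egf_coeff :: "(ltree \<Rightarrow> bool) \<Rightarrow> nat \<Rightarrow> real" where
  "egf_coeff P n = real (card {r. recursive_tree n r \<and> P r}) / fact n"

definition T_coeff :: "nat \<Rightarrow> real" where
  "T_coeff n = egf_coeff (\<lambda>_. True) n"

definition S_coeff :: "ptree \<Rightarrow> nat \<Rightarrow> real" where
  "S_coeff t n = egf_coeff (\<lambda>r. \<not> has_fringe_shape t r) n"

definition polya_sigma :: real where
  "polya_sigma = real_of_ereal (conv_radius (\<lambda>n. real (card {t. psize t = n})))"

end

(* Write b = 1 / sigma and L = log_b n, and let h_k be the sum, over all Polya trees t with k
   nodes, of the probability that a random recursive tree of size n has a fringe subtree of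
   shape t. Two bounds hold for h_k:
   - h_k is at most the number of Polya trees with k nodes, which is at most b^(k+1): these
     numbers are supermultiplicative (two trees of different sizes can be hung below a common
     root), so a Fekete-type argument bounds them in terms of the radius of convergence sigma;
   - h_k is at most the expected number of fringe subtrees with k nodes, which is n/(k(k+1))
     for k < n. This follows from a recursion in n, obtained by building a recursive tree of
     size n + 1 from one of size n by attaching a leaf labelled n + 1.
   For k < L/2 the first bound gives a geometric sum of order sqrt n. For L/2 <= k < L the
   interpolation min(x, y) <= x^(1/4) y^(3/4) gives terms b^((k+1)/4) (4n/L^2)^(3/4), whose
   geometric sum is of order n^(1/4) n^(3/4) / L^(3/2) = n / L^(3/2). *)

theory Submission
  imports Defs "HOL-Real_Asymp.Real_Asymp"
begin

section \<open>Labels of labelled trees\<close>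

primrec label_mset :: "ltree \<Rightarrow> nat multiset" where
  "label_mset (LNode a ts) = add_mset a (\<Sum>\<^sub># (image_mset label_mset ts))"

lemma size_label_mset: "size (label_mset r) = lsize r"
  by (induction r) (auto simp: image_mset.compositionality o_def intro!: arg_cong[where f=sum_mset] image_mset_cong)

lemma set_mset_label_mset: "set_mset (label_mset r) = labels r"
  by (induction r) auto

definition distinct_labels :: "ltree \<Rightarrow> bool" where
  "distinct_labels r \<longleftrightarrow> (\<forall>x. count (label_mset r) x \<le> 1)"

lemma card_set_mset_eq_size_iff: "card (set_mset M) = size M \<longleftrightarrow> (\<forall>x. count M x \<le> 1)"
proof -
  have "size M = (\<Sum>x\<in>set_mset M. 1 + (count M x - 1))"
    unfolding size_multiset_overloaded_eq by (intro sum.cong) auto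
  also have "\<dots> = card (set_mset M) + (\<Sum>x\<in>set_mset M. count M x - 1)"
    by (subst sum.distrib) simp
  finally have "card (set_mset M) = size M \<longleftrightarrow> (\<forall>x\<in>#M. count M x - 1 = 0)"
    by simp
  then show ?thesis
    by (metis count_eq_zero_iff diff_is_0_eq le0)
qed

lemma distinct_labels_iff_card: "distinct_labels r \<longleftrightarrow> card (labels r) = lsize r"
  by (simp add: distinct_labels_def card_set_mset_eq_size_iff flip: set_mset_label_mset size_label_mset)

lemma count_label_mset:
  assumes "distinct_labels r"
  shows "count (label_mset r) x = (if x \<in> labels r then 1 else 0)"
proof -
  have "count (label_mset r) x \<le> 1"
    using assms by (simp add: distinct_labels_def)
  moreover have "x \<in> labels r \<longleftrightarrow> 0 < count (label_mset r) x"
    by (simp add: set_mset_label_mset)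
  ultimately show ?thesis
    by (auto simp del: count_greater_zero_iff)
qed

lemma label_mset_fringe: "s \<in> fringe r \<Longrightarrow> label_mset s \<subseteq># label_mset r"
proof (induction r)
  case (LNode a ts)
  show ?case
  proof (cases "s = LNode a ts")
    case False
    then obtain c where c: "c \<in># ts" "s \<in> fringe c"
      using LNode.prems by auto
    then have "label_mset s \<subseteq># label_mset c"
      using LNode.IH by blast
    also have "\<dots> \<subseteq># \<Sum>\<^sub># (image_mset label_mset ts)"
      using c(1) by (metis insert_DiffM mset_subset_eq_add_left sum_mset.insert)
    also have "\<dots> \<subseteq># label_mset (LNode a ts)"
      by simp
    finally show ?thesis .
  qed simp
qed

lemma distinct_labels_fringe: "distinct_labels r \<Longrightarrow> s \<in> fringe r \<Longrightarrow> distinct_labels s"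
  unfolding distinct_labels_def by (meson label_mset_fringe le_trans mset_subset_eq_count)

lemma labels_fringe: "s \<in> fringe r \<Longrightarrow> labels s \<subseteq> labels r"
  by (metis label_mset_fringe set_mset_label_mset set_mset_mono)

lemma fringe_refl: "r \<in> fringe r"
  by (cases r) auto

lemma fringe_trans: "s \<in> fringe r \<Longrightarrow> fringe s \<subseteq> fringe r"
  by (induction r) auto

lemma finite_fringe: "finite (fringe r)"
  by (induction r) auto

lemma lroot_LNode [simp]: "lroot (LNode a ts) = a"
  by (simp add: lroot_def)

lemma lchildren_LNode [simp]: "lchildren (LNode a ts) = ts"
  by (simp add: lchildren_def)

lemma lroot_in_labels: "lroot r \<in> labels r"
  by (cases r) simp

lemma lsize_pos: "0 < lsize r"
  by (cases r) auto

lemma child_in_fringe: "s \<in> fringe r \<Longrightarrow> c \<in># lchildren s \<Longrightarrow> c \<in> fringe r"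
  by (cases s) (use fringe_trans fringe_refl in fastforce)

lemma distinct_labels_LNodeD:
  assumes "distinct_labels (LNode a ts)" and "c \<in># ts"
  shows "distinct_labels c" "a \<notin> labels c" "\<forall>d\<in>#ts - {#c#}. labels c \<inter> labels d = {}"
proof -
  let ?S = "\<Sum>\<^sub># (image_mset label_mset (ts - {#c#}))"
  have ts: "ts = add_mset c (ts - {#c#})"
    using assms(2) by simp
  have le1: "count (add_mset a (label_mset c + ?S)) x \<le> 1" for x
    using assms(1) unfolding distinct_labels_def by (subst (asm) ts) simp
  show "distinct_labels c"
    using assms distinct_labels_fringe fringe_refl by force
  show "a \<notin> labels c"
    using le1[of a] by (auto simp flip: set_mset_label_mset simp: count_eq_zero_iff)
  show "\<forall>d\<in>#ts - {#c#}. labels c \<inter> labels d = {}"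
  proof (intro ballI equals0I)
    fix d x assume d: "d \<in># ts - {#c#}" and x: "x \<in> labels c \<inter> labels d"
    have "label_mset d \<subseteq># ?S"
      using d by (metis insert_DiffM mset_subset_eq_add_left sum_mset.insert)
    moreover have "x \<in># label_mset d"
      using x by (simp add: set_mset_label_mset)
    ultimately have "x \<in># ?S"
      by (rule mset_subset_eqD)
    then have "0 < count ?S x"
      by simp
    moreover have "0 < count (label_mset c) x"
      using x by (simp add: set_mset_label_mset)
    moreover have "count (label_mset c) x + count ?S x \<le> count (add_mset a (label_mset c + ?S)) x"
      by simp
    ultimately show False
      using le1[of x] by linarith
  qed
qed

section \<open>Attaching a leaf\<close>

primrec add_leaf :: "nat \<Rightarrow> nat \<Rightarrow> ltree \<Rightarrow> ltree" where
  "add_leaf p m (LNode a ts) =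
     LNode a (image_mset (add_leaf p m) ts + (if a = p then {#LNode m {#}#} else {#}))"

primrec prune :: "nat \<Rightarrow> ltree \<Rightarrow> ltree" where
  "prune m (LNode a ts) = LNode a (filter_mset (\<lambda>c. lroot c \<noteq> m) (image_mset (prune m) ts))"

(* child_labels p r recovers where a leaf was attached, which makes add_leaf injective. *)
primrec child_labels :: "nat \<Rightarrow> ltree \<Rightarrow> nat set" where
  "child_labels p (LNode a ts) =
     (if a = p then lroot ` set_mset ts else {}) \<union> \<Union> (set_mset (image_mset (child_labels p) ts))"

lemma lroot_add_leaf [simp]: "lroot (add_leaf p m r) = lroot r"
  by (cases r) simp

lemma lroot_prune [simp]: "lroot (prune m r) = lroot r"
  by (cases r) simp

lemma lchildren_add_leaf:
  "lchildren (add_leaf p m s) =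
     image_mset (add_leaf p m) (lchildren s) + (if lroot s = p then {#LNode m {#}#} else {#})"
  by (cases s) simp

lemma count_sum_mset_image_mset: "count (\<Sum>\<^sub># (image_mset f M)) x = (\<Sum>a\<in>#M. count (f a) x)"
  by (induction M) auto

lemma count_label_mset_add_leaf:
  "count (label_mset (add_leaf p m r)) x = count (label_mset r) x + (if x = m then count (label_mset r) p else 0)"
proof (induction r)
  case (LNode a ts)
  have "count (\<Sum>\<^sub># (image_mset (label_mset \<circ> add_leaf p m) ts)) x
      = (\<Sum>c\<in>#ts. count (label_mset c) x + (if x = m then count (label_mset c) p else 0))"
    by (simp add: count_sum_mset_image_mset LNode.IH cong: image_mset_cong)
  then show ?case
    by (auto simp: image_mset.compositionality count_sum_mset_image_mset sum_mset.distrib)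
qed

lemma lsize_add_leaf: "lsize (add_leaf p m r) = lsize r + count (label_mset r) p"
proof -
  have "label_mset (add_leaf p m r) = label_mset r + replicate_mset (count (label_mset r) p) m"
    by (rule multiset_eqI) (simp add: count_label_mset_add_leaf)
  then show ?thesis
    by (metis size_label_mset size_replicate_mset size_union)
qed

lemma labels_add_leaf: "labels (add_leaf p m r) = labels r \<union> (if p \<in> labels r then {m} else {})"
  unfolding set_mset_label_mset[symmetric] set_eq_iff
  by (auto simp flip: count_greater_zero_iff simp: count_label_mset_add_leaf)

lemma fringe_add_leaf:
  "fringe (add_leaf p m r) = add_leaf p m ` fringe r \<union> (if p \<in> labels r then {LNode m {#}} else {})"
  by (induction r) (auto split: if_splits)

lemma add_leaf_absent: "p \<notin> labels r \<Longrightarrow> add_leaf p m r = r"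
  by (induction r) (auto intro: multiset.map_ident_strong)

lemma prune_absent: "m \<notin> labels r \<Longrightarrow> prune m r = r"
proof (induction r)
  case (LNode a ts)
  then have "image_mset (prune m) ts = ts" "\<forall>c\<in>#ts. lroot c \<noteq> m"
    by (auto intro: multiset.map_ident_strong lroot_in_labels)
  then show ?case
    by (simp add: filter_mset_eq_conv)
qed

lemma prune_add_leaf: "m \<notin> labels r \<Longrightarrow> prune m (add_leaf p m r) = r"
proof (induction r)
  case (LNode a ts)
  then have "image_mset (prune m \<circ> add_leaf p m) ts = ts" "\<forall>c\<in>#ts. lroot c \<noteq> m"
    by (auto intro: multiset.map_ident_strong lroot_in_labels)
  then show ?case
    by (simp add: filter_mset_eq_conv image_mset.compositionality)
qed

lemma child_labels_add_leaf:
  "m \<notin> labels r \<Longrightarrow> m \<in> child_labels q (add_leaf p m r) \<longleftrightarrow> q = p \<and> p \<in> labels r"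
proof (induction r)
  case (LNode a ts)
  then have "m \<notin> lroot ` set_mset ts"
    by (auto intro: lroot_in_labels)
  with LNode show ?case
    by (auto simp: image_image)
qed

lemma add_leaf_inj:
  assumes "m \<notin> labels r" "m \<notin> labels r'" "p \<in> labels r" "p' \<in> labels r'"
    and "add_leaf p m r = add_leaf p' m r'"
  shows "r = r'" "p = p'"
proof -
  show "r = r'"
    using assms prune_add_leaf by metis
  have "m \<in> child_labels p (add_leaf p' m r')"
    using assms child_labels_add_leaf by metis
  then show "p = p'"
    using child_labels_add_leaf assms(2) by blast
qed

lemma increasing_add_leaf:
  assumes "increasing r" "p \<in> labels r" "\<forall>x\<in>labels r. x < m"
  shows "increasing (add_leaf p m r)"
  unfolding increasing_def
proof (intro ballI)
  fix s' c' assume s': "s' \<in> fringe (add_leaf p m r)" and c': "c' \<in># lchildren s'"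
  show "lroot s' < lroot c'"
  proof (cases "s' = LNode m {#}")
    case False
    then obtain s where s: "s \<in> fringe r" "s' = add_leaf p m s"
      using s' by (auto simp: fringe_add_leaf split: if_splits)
    then consider c where "c \<in># lchildren s" "c' = add_leaf p m c" | "lroot s = p" "c' = LNode m {#}"
      using c' by (auto simp: lchildren_add_leaf split: if_splits)
    then show ?thesis
    proof cases
      case 1
      then show ?thesis
        using assms(1) s unfolding increasing_def by auto
    next
      case 2
      then show ?thesis
        using s assms(3) labels_fringe lroot_in_labels by force
    qed
  qed (use c' in simp)
qed

lemma increasing_add_leafD: "increasing (add_leaf p m r) \<Longrightarrow> increasing r"
  unfolding increasing_def
proof (intro ballI)
  fix s c assume inc: "\<forall>s\<in>fringe (add_leaf p m r). \<forall>c\<in>#lchildren s. lroot s < lroot c"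
    and s: "s \<in> fringe r" and c: "c \<in># lchildren s"
  have "add_leaf p m s \<in> fringe (add_leaf p m r)" "add_leaf p m c \<in># lchildren (add_leaf p m s)"
    using s c by (simp_all add: fringe_add_leaf lchildren_add_leaf)
  then have "lroot (add_leaf p m s) < lroot (add_leaf p m c)"
    using inc by blast
  then show "lroot s < lroot c"
    by simp
qed

lemma image_mset_add_leaf_absent: "\<forall>d\<in>#ts. p \<notin> labels d \<Longrightarrow> image_mset (add_leaf p m) ts = ts"
  by (auto intro: multiset.map_ident_strong add_leaf_absent)

lemma prune_add_mset_child:
  assumes "\<forall>d\<in>#ts. m \<notin> labels d"
  shows "prune m (LNode a (add_mset c ts)) = LNode a (if lroot c = m then ts else add_mset (prune m c) ts)"
proof -
  have "image_mset (prune m) ts = ts" "filter_mset (\<lambda>d. lroot d \<noteq> m) ts = ts"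
    using assms by (auto intro: multiset.map_ident_strong prune_absent lroot_in_labels simp: filter_mset_eq_conv)
  then show ?thesis
    by simp
qed

lemma add_leaf_prune:
  assumes "distinct_labels r" "m \<in> labels r" "lroot r \<noteq> m"
    and "\<forall>s\<in>fringe r. lroot s = m \<longrightarrow> lchildren s = {#}"
  shows "\<exists>p\<in>labels r. p \<noteq> m \<and> r = add_leaf p m (prune m r)"
  using assms
proof (induction r)
  case (LNode a ts)
  obtain c where c: "c \<in># ts" "m \<in> labels c"
    using LNode.prems(2,3) by auto
  define ts' where "ts' = ts - {#c#}"
  have ts: "ts = add_mset c ts'"
    using c(1) by (simp add: ts'_def)
  have c_dist: "distinct_labels c" "a \<notin> labels c" "\<forall>d\<in>#ts'. labels c \<inter> labels d = {}"
    using distinct_labels_LNodeD[OF LNode.prems(1) c(1)] by (simp_all add: ts'_def)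
  then have prune: "prune m (LNode a ts) = LNode a (if lroot c = m then ts' else add_mset (prune m c) ts')"
    unfolding ts using c(2) by (intro prune_add_mset_child) blast
  show ?case
  proof (cases "lroot c = m")
    case True
    have "lchildren c = {#}"
      using LNode.prems(4) True ts fringe_refl by auto
    then have "c = LNode m {#}"
      using True by (cases c) simp
    moreover have "image_mset (add_leaf a m) ts' = ts'"
      using distinct_labels_LNodeD(2)[OF LNode.prems(1)] ts by (intro image_mset_add_leaf_absent) auto
    ultimately have "add_leaf a m (prune m (LNode a ts)) = LNode a ts"
      using prune True ts by simp
    then show ?thesis
      using LNode.prems(3) by auto
  next
    case False
    have "\<forall>s\<in>fringe c. lroot s = m \<longrightarrow> lchildren s = {#}"
      using LNode.prems(4) ts by auto
    then obtain p where p: "p \<in> labels c" "p \<noteq> m" "c = add_leaf p m (prune m c)"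
      using LNode.IH[of c] c c_dist(1) False by auto
    have "image_mset (add_leaf p m) ts' = ts'" "a \<noteq> p"
      using p(1) c_dist(2,3) by (blast intro: image_mset_add_leaf_absent)+
    then have "add_leaf p m (prune m (LNode a ts)) = LNode a ts"
      using prune False p(3) ts by simp
    moreover have "p \<in> labels (LNode a ts)"
      using p(1) c(1) by auto
    ultimately show ?thesis
      using p(2) by metis
  qed
qed

section \<open>Recursive trees\<close>

abbreviation recursive_trees :: "nat \<Rightarrow> ltree set" where
  "recursive_trees n \<equiv> {r. recursive_tree n r}"

lemma recursive_tree_distinct_labels: "recursive_tree n r \<Longrightarrow> distinct_labels r"
  by (simp add: recursive_tree_def distinct_labels_iff_card)

lemma recursive_tree_fringe:
  assumes "recursive_tree n r" "s \<in> fringe r"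
  shows "labels s \<subseteq> {1..n}" "card (labels s) = lsize s"
proof -
  show "labels s \<subseteq> {1..n}"
    using assms labels_fringe unfolding recursive_tree_def by blast
  have "distinct_labels s"
    using assms distinct_labels_fringe recursive_tree_distinct_labels by blast
  then show "card (labels s) = lsize s"
    by (simp add: distinct_labels_iff_card)
qed

lemma recursive_tree_add_leaf:
  assumes "recursive_tree n r" "p \<in> {1..n}"
  shows "recursive_tree (Suc n) (add_leaf p (Suc n) r)"
proof -
  have r: "lsize r = n" "labels r = {1..n}" "increasing r"
    using assms(1) by (simp_all add: recursive_tree_def)
  have "count (label_mset r) p = 1"
    using assms recursive_tree_distinct_labels count_label_mset r(2) by simp
  then show ?thesis
    using r assms(2) increasing_add_leaf[of r p "Suc n"]
    by (auto simp: recursive_tree_def lsize_add_leaf labels_add_leaf)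
qed

lemma recursive_tree_largest_label_leaf:
  assumes "recursive_tree n r" "s \<in> fringe r" "lroot s = n"
  shows "lchildren s = {#}"
proof (rule ccontr)
  assume "lchildren s \<noteq> {#}"
  then obtain c where c: "c \<in># lchildren s"
    by blast
  then have "lroot c \<in> {1..n}"
    using assms(1,2) child_in_fringe labels_fringe lroot_in_labels unfolding recursive_tree_def by blast
  moreover have "lroot s < lroot c"
    using assms(1,2) c unfolding recursive_tree_def increasing_def by blast
  ultimately show False
    using assms(3) by simp
qed

lemma recursive_tree_lroot_eq:
  assumes "recursive_tree n r" "lroot r = n"
  shows "n = 1"
proof -
  have "lchildren r = {#}"
    by (rule recursive_tree_largest_label_leaf[OF assms(1) fringe_refl assms(2)])
  then have "lsize r = 1"
    by (cases r) simp
  then show ?thesis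
    using assms(1) by (simp add: recursive_tree_def)
qed

lemma recursive_tree_SucE:
  assumes "recursive_tree (Suc n) r'" "1 \<le> n"
  obtains r p where "recursive_tree n r" "p \<in> {1..n}" "r' = add_leaf p (Suc n) r"
proof -
  let ?m = "Suc n"
  have dist: "distinct_labels r'"
    using assms(1) recursive_tree_distinct_labels by blast
  have r': "labels r' = {1..?m}" "lsize r' = ?m" "increasing r'"
    using assms(1) by (auto simp: recursive_tree_def)
  have leaf: "\<forall>s\<in>fringe r'. lroot s = ?m \<longrightarrow> lchildren s = {#}"
    using recursive_tree_largest_label_leaf[OF assms(1)] by blast
  have root: "lroot r' \<noteq> ?m"
    using recursive_tree_lroot_eq[OF assms(1)] assms(2) by auto
  obtain p where p: "p \<in> labels r'" "p \<noteq> ?m" and r'_eq: "r' = add_leaf p ?m (prune ?m r')"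
    using add_leaf_prune[OF dist _ root leaf] r'(1) by auto
  define r where "r = prune ?m r'"
  have r'_r: "r' = add_leaf p ?m r"
    using r'_eq unfolding r_def .
  have labels_r': "labels r' = labels r \<union> (if p \<in> labels r then {?m} else {})"
    unfolding r'_r by (rule labels_add_leaf)
  then have p_r: "p \<in> labels r"
    using p by (auto split: if_splits)
  have "count (label_mset r') ?m \<le> 1"
    using dist by (simp add: distinct_labels_def)
  then have "count (label_mset r) ?m + count (label_mset r) p \<le> 1"
    unfolding r'_r count_label_mset_add_leaf by simp
  moreover have "0 < count (label_mset r) p"
    using p_r by (simp add: set_mset_label_mset)
  ultimately have "count (label_mset r) ?m = 0" "count (label_mset r) p = 1"
    by linarith+
  then have "?m \<notin> labels r"
    by (simp flip: set_mset_label_mset add: count_eq_zero_iff)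
  then have "labels r = labels r' - {?m}"
    using labels_r' p_r by auto
  also have "\<dots> = {1..n}"
    using r'(1) atLeastAtMostSuc_conv[of 1 n] by simp
  finally have "labels r = {1..n}" .
  moreover have "lsize r = n"
    using r'(2) \<open>count (label_mset r) p = 1\<close> unfolding r'_r by (simp add: lsize_add_leaf)
  moreover have "increasing r"
    using r'(3) increasing_add_leafD unfolding r'_r by blast
  ultimately show thesis
    using that[of r p] p_r r'_r by (simp add: recursive_tree_def)
qed

lemma bij_betw_add_leaf:
  assumes "1 \<le> n"
  shows "bij_betw (\<lambda>(r, p). add_leaf p (Suc n) r) (recursive_trees n \<times> {1..n}) (recursive_trees (Suc n))"
proof (rule bij_betw_imageI)
  show "inj_on (\<lambda>(r, p). add_leaf p (Suc n) r) (recursive_trees n \<times> {1..n})"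
  proof (rule inj_onI)
    fix x y assume x: "x \<in> recursive_trees n \<times> {1..n}" and y: "y \<in> recursive_trees n \<times> {1..n}"
      and eq: "(\<lambda>(r, p). add_leaf p (Suc n) r) x = (\<lambda>(r, p). add_leaf p (Suc n) r) y"
    obtain r p r' p' where xy: "x = (r, p)" "y = (r', p')"
      by fastforce
    have "Suc n \<notin> labels r" "Suc n \<notin> labels r'" "p \<in> labels r" "p' \<in> labels r'"
      using x y xy by (auto simp: recursive_tree_def)
    moreover have "add_leaf p (Suc n) r = add_leaf p' (Suc n) r'"
      using eq xy by simp
    ultimately have "r = r'" "p = p'"
      by (rule add_leaf_inj)+
    then show "x = y"
      using xy by simp
  qed
  show "(\<lambda>(r, p). add_leaf p (Suc n) r) ` (recursive_trees n \<times> {1..n}) = recursive_trees (Suc n)"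
  proof (intro equalityI subsetI)
    fix r' assume "r' \<in> recursive_trees (Suc n)"
    then have "recursive_tree (Suc n) r'"
      by simp
    then obtain r p where "recursive_tree n r" "p \<in> {1..n}" "r' = add_leaf p (Suc n) r"
      by (rule recursive_tree_SucE[OF _ assms])
    then show "r' \<in> (\<lambda>(r, p). add_leaf p (Suc n) r) ` (recursive_trees n \<times> {1..n})"
      by (intro image_eqI[of _ _ "(r, p)"]) simp_all
  qed (auto intro: recursive_tree_add_leaf)
qed

lemma recursive_trees_0: "recursive_trees 0 = {}"
  using lsize_pos by (auto simp: recursive_tree_def)

lemma recursive_trees_1: "recursive_trees 1 = {LNode 1 {#}}"
proof (intro equalityI subsetI)
  fix r assume "r \<in> recursive_trees 1"
  then have r: "lsize r = 1" "labels r = {1}"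
    by (auto simp: recursive_tree_def)
  then obtain a ts where "r = LNode a ts" "\<Sum>\<^sub># (image_mset lsize ts) = 0"
    by (cases r) simp
  then have "r = LNode a {#}"
    using lsize_pos by (metis multiset_nonemptyE not_gr0 sum_mset_0_iff set_image_mset image_eqI)
  then show "r \<in> {LNode 1 {#}}"
    using r by simp
qed (simp add: recursive_tree_def increasing_def)

lemma finite_recursive_trees: "finite (recursive_trees n)"
proof (induction n)
  case (Suc n)
  then show ?case
    using recursive_trees_1 bij_betw_finite[OF bij_betw_add_leaf[of n]]
    by (cases "n = 0") auto
qed (simp add: recursive_trees_0)

lemma card_recursive_trees_Suc: "1 \<le> n \<Longrightarrow> card (recursive_trees (Suc n)) = n * card (recursive_trees n)"
  using bij_betw_same_card[OF bij_betw_add_leaf] by (simp add: card_cartesian_product mult.commute)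

lemma card_recursive_trees: "1 \<le> n \<Longrightarrow> card (recursive_trees n) = fact (n - 1)"
proof (induction n rule: nat_induct_at_least)
  case (Suc n)
  then show ?case
    by (simp add: card_recursive_trees_Suc fact_reduce[of n])
qed (use recursive_trees_1 in simp)

section \<open>Fringe subtrees of a given size\<close>

definition fringe_count :: "nat \<Rightarrow> ltree \<Rightarrow> nat" where
  "fringe_count k r = card {s\<in>fringe r. lsize s = k}"

definition total_fringe_count :: "nat \<Rightarrow> nat \<Rightarrow> nat" where
  "total_fringe_count n k = (\<Sum>r\<in>recursive_trees n. fringe_count k r)"

(* The expected number of fringe subtrees with k nodes of a random recursive tree of size n. *)
definition mean_fringe_count :: "nat \<Rightarrow> nat \<Rightarrow> real" where
  "mean_fringe_count n k = (if k < n then real n / (real k * (real k + 1)) else if k = n then 1 else 0)"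

lemma sum_card_filter_swap:
  assumes "finite A" "finite B"
  shows "(\<Sum>a\<in>A. card {b\<in>B. P a b}) = (\<Sum>b\<in>B. card {a\<in>A. P a b})"
proof -
  have card_filter: "card {x\<in>X. Q x} = (\<Sum>x\<in>X. if Q x then 1 else 0)" if "finite X" for X and Q :: "'c \<Rightarrow> bool"
    by (subst card_eq_sum) (rule sum.inter_filter[OF that])
  show ?thesis
    unfolding card_filter[OF assms(1)] card_filter[OF assms(2)] by (rule sum.swap)
qed

lemma fringe_count_0: "fringe_count 0 r = 0"
proof -
  have "{s\<in>fringe r. lsize s = 0} = {}"
    using lsize_pos by (metis (mono_tags, lifting) empty_Collect_eq less_irrefl)
  then show ?thesis
    unfolding fringe_count_def by (simp only: card.empty)
qed

lemma fringe_add_leaf_size_subset: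
  assumes "distinct_labels r"
  shows "{s'\<in>fringe (add_leaf p m r). lsize s' = Suc j}
    \<subseteq> add_leaf p m ` ({s\<in>fringe r. lsize s = Suc j \<and> p \<notin> labels s} \<union> {s\<in>fringe r. lsize s = j \<and> p \<in> labels s})
       \<union> (if j = 0 then {LNode m {#}} else {})"
proof
  fix s' assume s': "s' \<in> {s'\<in>fringe (add_leaf p m r). lsize s' = Suc j}"
  show "s' \<in> add_leaf p m ` ({s\<in>fringe r. lsize s = Suc j \<and> p \<notin> labels s} \<union> {s\<in>fringe r. lsize s = j \<and> p \<in> labels s})
       \<union> (if j = 0 then {LNode m {#}} else {})"
  proof (cases "s' \<in> add_leaf p m ` fringe r")
    case True
    then obtain s where s: "s \<in> fringe r" "s' = add_leaf p m s"
      by blast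
    have "distinct_labels s"
      using distinct_labels_fringe assms s(1) by blast
    then have "lsize s' = lsize s + (if p \<in> labels s then 1 else 0)"
      using s(2) by (simp add: lsize_add_leaf count_label_mset)
    then show ?thesis
      using s s' by (auto split: if_splits)
  next
    case False
    then show ?thesis
      using s' by (auto simp: fringe_add_leaf split: if_splits)
  qed
qed

lemma fringe_count_add_leaf:
  assumes "distinct_labels r"
  shows "fringe_count (Suc j) (add_leaf p m r)
    \<le> card {s\<in>fringe r. lsize s = Suc j \<and> p \<notin> labels s} + card {s\<in>fringe r. lsize s = j \<and> p \<in> labels s}
       + (if j = 0 then 1 else 0)"
proof -
  let ?A = "{s\<in>fringe r. lsize s = Suc j \<and> p \<notin> labels s}"
  let ?B = "{s\<in>fringe r. lsize s = j \<and> p \<in> labels s}"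
  let ?L = "if j = 0 then {LNode m {#}} else {}"
  have "{s'\<in>fringe (add_leaf p m r). lsize s' = Suc j} \<subseteq> add_leaf p m ` (?A \<union> ?B) \<union> ?L"
    using assms by (rule fringe_add_leaf_size_subset)
  moreover have fin: "finite (?A \<union> ?B)"
    using finite_fringe by auto
  ultimately have "fringe_count (Suc j) (add_leaf p m r) \<le> card (add_leaf p m ` (?A \<union> ?B) \<union> ?L)"
    unfolding fringe_count_def by (intro card_mono) auto
  also have "\<dots> \<le> card (add_leaf p m ` (?A \<union> ?B)) + card ?L"
    by (rule card_Un_le)
  also have "\<dots> \<le> card (?A \<union> ?B) + card ?L"
    using card_image_le[OF fin] by simp
  also have "\<dots> \<le> card ?A + card ?B + card ?L"
    using card_Un_le[of ?A ?B] by simp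
  finally show ?thesis
    by (cases "j = 0") simp_all
qed

lemma sum_card_fringe_without_label:
  assumes "recursive_tree n r"
  shows "(\<Sum>p\<in>{1..n}. card {s\<in>fringe r. lsize s = k \<and> p \<notin> labels s}) = (n - k) * fringe_count k r"
proof -
  have "(\<Sum>p\<in>{1..n}. card {s\<in>fringe r. lsize s = k \<and> p \<notin> labels s})
      = (\<Sum>s\<in>fringe r. card {p\<in>{1..n}. lsize s = k \<and> p \<notin> labels s})"
    using finite_fringe by (intro sum_card_filter_swap) auto
  also have "\<dots> = (\<Sum>s\<in>fringe r. if lsize s = k then n - k else 0)"
  proof (intro sum.cong refl)
    fix s assume "s \<in> fringe r"
    then have "labels s \<subseteq> {1..n}" "card (labels s) = lsize s"
      using recursive_tree_fringe assms by blast+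
    then have "card ({1..n} - labels s) = n - lsize s"
      by (simp add: card_Diff_subset finite_subset)
    moreover have "{p\<in>{1..n}. lsize s = k \<and> p \<notin> labels s} = (if lsize s = k then {1..n} - labels s else {})"
      by auto
    ultimately show "card {p\<in>{1..n}. lsize s = k \<and> p \<notin> labels s} = (if lsize s = k then n - k else 0)"
      by simp
  qed
  also have "\<dots> = (n - k) * fringe_count k r"
    unfolding fringe_count_def using finite_fringe by (simp add: sum.inter_filter[symmetric])
  finally show ?thesis .
qed

lemma sum_card_fringe_with_label:
  assumes "recursive_tree n r"
  shows "(\<Sum>p\<in>{1..n}. card {s\<in>fringe r. lsize s = k \<and> p \<in> labels s}) = k * fringe_count k r"
proof -
  have "(\<Sum>p\<in>{1..n}. card {s\<in>fringe r. lsize s = k \<and> p \<in> labels s})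
      = (\<Sum>s\<in>fringe r. card {p\<in>{1..n}. lsize s = k \<and> p \<in> labels s})"
    using finite_fringe by (intro sum_card_filter_swap) auto
  also have "\<dots> = (\<Sum>s\<in>fringe r. if lsize s = k then k else 0)"
  proof (intro sum.cong refl)
    fix s assume "s \<in> fringe r"
    then have "labels s \<subseteq> {1..n}" "card (labels s) = lsize s"
      using recursive_tree_fringe assms by blast+
    moreover have "{p\<in>{1..n}. lsize s = k \<and> p \<in> labels s} = (if lsize s = k then labels s else {})"
      using \<open>labels s \<subseteq> {1..n}\<close> by auto
    ultimately show "card {p\<in>{1..n}. lsize s = k \<and> p \<in> labels s} = (if lsize s = k then k else 0)"
      by simp
  qed
  also have "\<dots> = k * fringe_count k r"
    unfolding fringe_count_def using finite_fringe by (simp add: sum.inter_filter[symmetric])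
  finally show ?thesis .
qed

lemma total_fringe_count_Suc_le:
  assumes "1 \<le> n"
  shows "total_fringe_count (Suc n) (Suc j)
    \<le> (n - Suc j) * total_fringe_count n (Suc j) + j * total_fringe_count n j
       + (if j = 0 then n * card (recursive_trees n) else 0)"
proof -
  have "total_fringe_count (Suc n) (Suc j)
      = (\<Sum>(r, p)\<in>recursive_trees n \<times> {1..n}. fringe_count (Suc j) (add_leaf p (Suc n) r))"
    unfolding total_fringe_count_def sum.reindex_bij_betw[OF bij_betw_add_leaf[OF assms], symmetric]
    by (simp add: split_def)
  also have "\<dots> = (\<Sum>r\<in>recursive_trees n. \<Sum>p\<in>{1..n}. fringe_count (Suc j) (add_leaf p (Suc n) r))"
    by (simp add: sum.cartesian_product)
  also have "\<dots> \<le> (\<Sum>r\<in>recursive_trees n.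
      (n - Suc j) * fringe_count (Suc j) r + j * fringe_count j r + (if j = 0 then n else 0))"
  proof (rule sum_mono)
    fix r assume "r \<in> recursive_trees n"
    then have r: "recursive_tree n r"
      by simp
    have "(\<Sum>p\<in>{1..n}. fringe_count (Suc j) (add_leaf p (Suc n) r))
        \<le> (\<Sum>p\<in>{1..n}. card {s\<in>fringe r. lsize s = Suc j \<and> p \<notin> labels s}
            + card {s\<in>fringe r. lsize s = j \<and> p \<in> labels s} + (if j = 0 then 1 else 0))"
      using fringe_count_add_leaf[OF recursive_tree_distinct_labels[OF r]] by (intro sum_mono)
    also have "\<dots> = (n - Suc j) * fringe_count (Suc j) r + j * fringe_count j r + (if j = 0 then n else 0)"
      using sum_card_fringe_without_label[OF r] sum_card_fringe_with_label[OF r] by (simp add: sum.distrib)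
    finally show "(\<Sum>p\<in>{1..n}. fringe_count (Suc j) (add_leaf p (Suc n) r))
        \<le> (n - Suc j) * fringe_count (Suc j) r + j * fringe_count j r + (if j = 0 then n else 0)" .
  qed
  also have "\<dots> = (n - Suc j) * total_fringe_count n (Suc j) + j * total_fringe_count n j
       + (if j = 0 then n * card (recursive_trees n) else 0)"
    unfolding total_fringe_count_def by (simp add: sum.distrib sum_distrib_left)
  finally show ?thesis .
qed

lemma mean_fringe_count_below:
  assumes "j < n"
  shows "real j * mean_fringe_count n j + (if j = 0 then real n else 0) = real n / (real j + 1)"
proof (cases "j = 0")
  case False
  then have "real j \<noteq> 0"
    by simp
  have "real j * (real n / (real j * (real j + 1))) = (real j * real n) / (real j * (real j + 1))"
    by (rule times_divide_eq_right)
  also have "\<dots> = real n / (real j + 1)"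
    using \<open>real j \<noteq> 0\<close> by (rule nonzero_mult_divide_mult_cancel_left)
  finally show ?thesis
    using assms False by (simp add: mean_fringe_count_def)
qed simp

lemma mean_recurrence_identity:
  fixes N J :: "'a::field"
  assumes "J \<noteq> 0" "J + 1 \<noteq> 0"
  shows "(N - J) * (N / (J * (J + 1))) + N / J = N * ((N + 1) / (J * (J + 1)))"
proof -
  have "N / J = N * (J + 1) / (J * (J + 1))"
    using assms by simp
  then have "(N - J) * (N / (J * (J + 1))) + N / J = ((N - J) * N + N * (J + 1)) / (J * (J + 1))"
    by (simp add: add_divide_distrib)
  also have "(N - J) * N + N * (J + 1) = N * (N + 1)"
    by (simp add: algebra_simps)
  finally show ?thesis
    by simp
qed

lemma mean_fringe_count_Suc:
  assumes "1 \<le> n"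
  shows "real (n - Suc j) * mean_fringe_count n (Suc j) + real j * mean_fringe_count n j
    + (if j = 0 then real n else 0) = real n * mean_fringe_count (Suc n) (Suc j)"
proof -
  consider (below) "Suc j < n" | (last) "Suc j = n" | (whole) "j = n" | (above) "n < j"
    by linarith
  then show ?thesis
  proof cases
    case below
    have "real (Suc j) \<noteq> 0" "real (Suc j) + 1 \<noteq> 0"
      by linarith+
    then have "(real n - real (Suc j)) * (real n / (real (Suc j) * (real (Suc j) + 1))) + real n / real (Suc j)
        = real n * ((real n + 1) / (real (Suc j) * (real (Suc j) + 1)))"
      by (rule mean_recurrence_identity)
    with below show ?thesis
      unfolding add.assoc mean_fringe_count_below[OF Suc_lessD[OF below]]
      by (simp add: mean_fringe_count_def ac_simps)
  next
    case last
    then show ?thesis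
      unfolding add.assoc mean_fringe_count_below[OF lessI[of j, unfolded last]] using last[symmetric]
      by (simp add: mean_fringe_count_def ac_simps)
  qed (use assms in \<open>simp_all add: mean_fringe_count_def\<close>)
qed

lemma total_fringe_count_le:
  assumes "1 \<le> n"
  shows "real (total_fringe_count n k) \<le> mean_fringe_count n k * card (recursive_trees n)"
  using assms
proof (induction n arbitrary: k rule: nat_induct_at_least)
  case base
  have "total_fringe_count 1 k = (if k = 1 then 1 else 0)"
    unfolding total_fringe_count_def recursive_trees_1 by (simp add: fringe_count_def Collect_conv_if)
  then show ?case
    unfolding recursive_trees_1 by (simp add: mean_fringe_count_def)
next
  case (Suc n)
  let ?C = "real (card (recursive_trees n))"
  show ?case
  proof (cases k)
    case 0
    then show ?thesis
      by (simp add: total_fringe_count_def fringe_count_0 mean_fringe_count_def)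
  next
    case (Suc j)
    have "real (total_fringe_count (Suc n) k)
        \<le> real ((n - Suc j) * total_fringe_count n (Suc j) + j * total_fringe_count n j
           + (if j = 0 then n * card (recursive_trees n) else 0))"
      unfolding Suc of_nat_le_iff by (rule total_fringe_count_Suc_le[OF Suc.hyps])
    also have "\<dots> = real (n - Suc j) * total_fringe_count n (Suc j) + real j * total_fringe_count n j
           + (if j = 0 then real n * ?C else 0)"
      by (cases "j = 0") simp_all
    also have "\<dots> \<le> real (n - Suc j) * (mean_fringe_count n (Suc j) * ?C) + real j * (mean_fringe_count n j * ?C)
           + (if j = 0 then real n * ?C else 0)"
      using Suc.IH by (intro add_mono mult_left_mono order.refl) auto
    also have "\<dots> = real n * mean_fringe_count (Suc n) k * ?C"
      using mean_fringe_count_Suc[OF Suc.hyps, of j, symmetric] unfolding Suc by (simp add: algebra_simps)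
    also have "\<dots> = mean_fringe_count (Suc n) k * card (recursive_trees (Suc n))"
      using card_recursive_trees_Suc[OF Suc.hyps] by simp
    finally show ?thesis .
  qed
qed

section \<open>An analytic estimate\<close>

lemma Collect_of_nat_less_eq_lessThan: "{k::nat. real k < X} = {..<nat \<lceil>X\<rceil>}"
  by (auto simp: zless_nat_eq_int_zless less_ceiling_iff)

lemma finite_Collect_of_nat_less: "finite {k::nat. real k < X}"
  by (simp add: Collect_of_nat_less_eq_lessThan)

lemma sum_le_geometric_bound:
  fixes x X :: real and h :: "nat \<Rightarrow> real"
  assumes x: "1 < x" and X: "0 \<le> X" and h: "\<And>k. real k < X \<Longrightarrow> h k \<le> x ^ (k + 1)"
  shows "(\<Sum>k | real k < X. h k) \<le> x\<^sup>2 / (x - 1) * x powr X"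
proof -
  let ?N = "nat \<lceil>X\<rceil>"
  have "x ^ ?N = x powr real ?N"
    using x by (simp add: powr_realpow)
  also have "\<dots> \<le> x powr (X + 1)"
    using x X by (intro powr_mono) linarith+
  also have "\<dots> = x * x powr X"
    using x by (simp add: powr_add)
  finally have power_le: "x ^ ?N \<le> x * x powr X" .
  have "(\<Sum>k | real k < X. h k) \<le> (\<Sum>k<?N. x ^ (k + 1))"
    unfolding Collect_of_nat_less_eq_lessThan using h
    by (intro sum_mono) (auto simp: Collect_of_nat_less_eq_lessThan[symmetric])
  also have "\<dots> = x * ((x ^ ?N - 1) / (x - 1))"
    using x by (simp add: sum_distrib_left[symmetric] geometric_sum)
  also have "\<dots> \<le> x * (x * x powr X / (x - 1))"
    using x power_le by (intro divide_right_mono mult_left_mono) auto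
  finally show ?thesis
    by (simp add: power2_eq_square ac_simps)
qed

lemma le_powr_interpolate:
  fixes h x y \<theta> :: real
  assumes "0 \<le> h" "h \<le> x" "h \<le> y" "0 \<le> \<theta>" "\<theta> \<le> 1"
  shows "h \<le> x powr \<theta> * y powr (1 - \<theta>)"
proof (cases "h = 0")
  case False
  then have "h = h powr \<theta> * h powr (1 - \<theta>)"
    using assms(1) by (simp flip: powr_add)
  also have "\<dots> \<le> x powr \<theta> * y powr (1 - \<theta>)"
    using assms by (intro mult_mono powr_mono2) auto
  finally show ?thesis .
qed simp

lemma le_power_inverse_square_interpolation:
  fixes b h L n :: real
  assumes b: "1 < b" and n: "0 \<le> n"
    and h: "0 \<le> h" "h \<le> b ^ (k + 1)" "h \<le> n / (real k * (real k + 1))"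
    and L: "0 < L" "L / 2 \<le> real k"
  shows "h \<le> (b powr (1/4)) ^ (k + 1) * (4 * n / L\<^sup>2) powr (3/4)"
proof -
  have "h \<le> (b ^ (k + 1)) powr (1/4) * (n / (real k * (real k + 1))) powr (1 - 1/4)"
    by (rule le_powr_interpolate[OF h]) simp_all
  also have "(1::real) - 1/4 = 3/4"
    by simp
  also have "(b ^ (k + 1)) powr (1/4) = b powr (real (k + 1) * (1/4))"
    using b by (subst powr_realpow[symmetric]) (auto simp: powr_powr)
  also have "\<dots> = (b powr (1/4)) ^ (k + 1)"
    using b by (subst powr_power) auto
  also have "(n / (real k * (real k + 1))) powr (3/4) \<le> (4 * n / L\<^sup>2) powr (3/4)"
  proof (rule powr_mono2)
    have "L\<^sup>2 \<le> (2 * real k)\<^sup>2"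
      using L by (intro power_mono) auto
    also have "\<dots> \<le> 4 * (real k * (real k + 1))"
      by (simp add: power2_eq_square algebra_simps)
    finally have "L\<^sup>2 \<le> 4 * (real k * (real k + 1))" .
    moreover have "0 < real k"
      using L by linarith
    ultimately have "4 * n / (4 * (real k * (real k + 1))) \<le> 4 * n / L\<^sup>2"
      using L n by (intro divide_left_mono) auto
    then show "n / (real k * (real k + 1)) \<le> 4 * n / L\<^sup>2"
      by simp
  qed (use h in auto)
  finally show ?thesis
    using b by (simp add: mult_left_mono)
qed

lemma sum_less_half_log_le:
  fixes b :: real and n :: nat and h :: "nat \<Rightarrow> real"
  defines "L \<equiv> log b n"
  assumes b: "1 < b" and n: "0 < n" and L: "0 \<le> L" and h: "\<And>k. h k \<le> b ^ (k + 1)"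
  shows "(\<Sum>k | real k < L / 2. h k) \<le> b\<^sup>2 / (b - 1) * sqrt n"
proof -
  have "(\<Sum>k | real k < L / 2. h k) \<le> b\<^sup>2 / (b - 1) * b powr (L / 2)"
    using b L h by (intro sum_le_geometric_bound) auto
  also have "b powr (L / 2) = sqrt (b powr L)"
    using b by (intro powr_half_sqrt_powr) simp
  also have "\<dots> = sqrt n"
    using b n by (simp add: L_def)
  finally show ?thesis .
qed

lemma sum_upper_half_log_le:
  fixes b :: real and n :: nat and h :: "nat \<Rightarrow> real"
  defines "L \<equiv> log b n"
  assumes b: "1 < b" and n: "0 < n" and L: "2 \<le> L"
    and h_nonneg: "\<And>k. 0 \<le> h k" and h_power: "\<And>k. h k \<le> b ^ (k + 1)"
    and h_inverse_square: "\<And>k. 1 \<le> k \<Longrightarrow> real k < L \<Longrightarrow> h k \<le> n / (real k * (real k + 1))"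
  shows "(\<Sum>k | L / 2 \<le> real k \<and> real k < L. h k)
    \<le> (b powr (1/4))\<^sup>2 / (b powr (1/4) - 1) * 4 powr (3/4) * (n / L powr (3/2))"
proof -
  define c where "c = b powr (1/4)"
  define D where "D = (4 * real n / L\<^sup>2) powr (3/4)"
  have c: "1 < c"
    using b by (simp add: c_def)
  have "c powr L = (b powr L) powr (1/4)"
    unfolding c_def powr_powr by (simp add: mult.commute)
  then have cL: "c powr L = n powr (1/4)"
    using b n by (simp add: L_def)
  have "(\<Sum>k | L / 2 \<le> real k \<and> real k < L. h k) \<le> (\<Sum>k | L / 2 \<le> real k \<and> real k < L. c ^ (k + 1) * D)"
  proof (rule sum_mono)
    fix k assume k: "k \<in> {k. L / 2 \<le> real k \<and> real k < L}"
    then have "1 \<le> k"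
      using L by simp
    then show "h k \<le> c ^ (k + 1) * D"
      unfolding c_def D_def using k L b h_nonneg h_power h_inverse_square
      by (intro le_power_inverse_square_interpolation) auto
  qed
  also have "\<dots> \<le> (\<Sum>k | real k < L. c ^ (k + 1) * D)"
    using c by (intro sum_mono2 finite_Collect_of_nat_less) (auto simp: D_def)
  also have "\<dots> = (\<Sum>k | real k < L. c ^ (k + 1)) * D"
    by (simp add: sum_distrib_right)
  also have "\<dots> \<le> c\<^sup>2 / (c - 1) * c powr L * D"
    using c L by (intro mult_right_mono sum_le_geometric_bound) (auto simp: D_def)
  also have "\<dots> = c\<^sup>2 / (c - 1) * n powr (1/4) * D"
    using cL by simp
  also have "\<dots> = c\<^sup>2 / (c - 1) * 4 powr (3/4) * (n / L powr (3/2))"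
  proof -
    have "L\<^sup>2 = L powr 2"
      using L by simp
    then have "(L\<^sup>2) powr (3/4) = L powr (3/2)"
      by (simp add: powr_powr)
    then have "D = 4 powr (3/4) * n powr (3/4) / L powr (3/2)"
      unfolding D_def by (simp add: powr_divide powr_mult)
    then have "n powr (1/4) * D = 4 powr (3/4) * (n powr (1/4) * n powr (3/4)) / L powr (3/2)"
      by (simp only: times_divide_eq_right mult.left_commute)
    also have "n powr (1/4) * n powr (3/4) = n"
      using n by (simp flip: powr_add)
    finally show ?thesis
      by (simp only: mult.assoc times_divide_eq_right)
  qed
  finally show ?thesis
    unfolding c_def .
qed

lemma sum_less_log_le:
  fixes b :: real and n :: nat and h :: "nat \<Rightarrow> real"
  defines "L \<equiv> log b n"
  assumes b: "1 < b" and L: "2 \<le> L"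
    and h_nonneg: "\<And>k. 0 \<le> h k" and h_power: "\<And>k. h k \<le> b ^ (k + 1)"
    and h_inverse_square: "\<And>k. 1 \<le> k \<Longrightarrow> real k < L \<Longrightarrow> h k \<le> n / (real k * (real k + 1))"
  shows "(\<Sum>k | real k < L. h k)
    \<le> b\<^sup>2 / (b - 1) * sqrt n + (b powr (1/4))\<^sup>2 / (b powr (1/4) - 1) * 4 powr (3/4) * (n / L powr (3/2))"
proof -
  have n: "0 < n"
    using L by (cases "n = 0") (simp_all add: L_def log_def)
  let ?low = "{k. real k < L / 2}" and ?high = "{k. L / 2 \<le> real k \<and> real k < L}"
  have "{k. real k < L} = ?low \<union> ?high"
    using L by auto
  moreover have "finite ?low" "finite ?high"
    by (auto intro: finite_subset[OF _ finite_Collect_of_nat_less[of L]] finite_Collect_of_nat_less)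
  ultimately have "(\<Sum>k | real k < L. h k) = (\<Sum>k\<in>?low. h k) + (\<Sum>k\<in>?high. h k)"
    by (simp add: sum.union_disjoint disjoint_iff)
  moreover have "(\<Sum>k\<in>?low. h k) \<le> b\<^sup>2 / (b - 1) * sqrt n"
    using b n L h_power unfolding L_def by (intro sum_less_half_log_le) auto
  moreover have "(\<Sum>k\<in>?high. h k)
      \<le> (b powr (1/4))\<^sup>2 / (b powr (1/4) - 1) * 4 powr (3/4) * (n / L powr (3/2))"
    using b n L h_nonneg h_power h_inverse_square unfolding L_def by (intro sum_upper_half_log_le) auto
  ultimately show ?thesis
    by linarith
qed

section \<open>Counting Polya trees\<close>

abbreviation ptree_count :: "nat \<Rightarrow> nat" where
  "ptree_count k \<equiv> card {t. psize t = k}"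

lemma psize_pos: "0 < psize t"
  by (cases t) auto

lemma finite_psize_le: "finite {t. psize t \<le> k}"
proof (induction k)
  case 0
  have "{t. psize t \<le> 0} = {}"
    using psize_pos by auto
  then show ?case
    by (simp only: finite.emptyI)
next
  case (Suc k)
  let ?M = "\<Union>j\<le>k. multisets_of_size {t. psize t \<le> k} j"
  have "{t. psize t \<le> Suc k} \<subseteq> PNode ` ?M"
  proof
    fix t assume t: "t \<in> {t. psize t \<le> Suc k}"
    obtain M where M: "t = PNode M"
      by (cases t)
    have sum_le: "\<Sum>\<^sub># (image_mset psize M) \<le> k"
      using t M by simp
    have "size M \<le> \<Sum>\<^sub># (image_mset psize M)"
    proof (induction M)
      case (add x M)
      then show ?case
        using psize_pos[of x] by simp
    qed simp
    moreover have "psize s \<le> \<Sum>\<^sub># (image_mset psize M)" if "s \<in># M" for s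
      using that by (metis insert_DiffM le_add1 sum_mset.insert)
    ultimately show "t \<in> PNode ` ?M"
      using M sum_le by (force simp: multisets_of_size_def)
  qed
  moreover have "finite ?M"
    using Suc by auto
  ultimately show ?case
    using finite_subset by blast
qed

lemma finite_psize_eq: "finite {t. psize t = k}"
  by (rule finite_subset[OF _ finite_psize_le[of k]]) auto

lemma ptree_count_le_Suc: "ptree_count k \<le> ptree_count (Suc k)"
proof (rule card_inj_on_le)
  show "inj_on (\<lambda>t. PNode {#t#}) {t. psize t = k}"
    by (auto intro: inj_onI)
qed (auto simp: finite_psize_eq)

lemma ptree_count_mult_le:
  assumes "m < n"
  shows "ptree_count m * ptree_count n \<le> ptree_count (Suc (m + n))"
proof -
  let ?f = "\<lambda>(s, t). PNode {#s, t#}"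
  have "inj_on ?f ({t. psize t = m} \<times> {t. psize t = n})"
  proof (rule inj_onI)
    fix x y assume x: "x \<in> {t. psize t = m} \<times> {t. psize t = n}" and y: "y \<in> {t. psize t = m} \<times> {t. psize t = n}"
      and eq: "?f x = ?f y"
    obtain s t s' t' where xy: "x = (s, t)" "y = (s', t')"
      by fastforce
    have sizes: "psize t = n" "psize s' = m"
      using x y xy by auto
    have eq': "add_mset s {#t#} = add_mset s' {#t'#}"
      using eq xy by simp
    then have "t \<in># add_mset s' {#t'#}"
      by (metis add_mset_commute union_single_eq_member)
    then have "t = t'"
      using sizes assms by auto
    then have "s = s'"
      using eq' by (simp add: add_mset_commute)
    then show "x = y"
      using xy \<open>t = t'\<close> by simp
  qed
  moreover have "?f ` ({t. psize t = m} \<times> {t. psize t = n}) \<subseteq> {t. psize t = Suc (m + n)}"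
    by auto
  ultimately have "card ({t. psize t = m} \<times> {t. psize t = n}) \<le> ptree_count (Suc (m + n))"
    using finite_psize_eq card_inj_on_le by blast
  then show ?thesis
    by (simp add: card_cartesian_product)
qed

lemma ptree_count_power_le: "1 \<le> j \<Longrightarrow> ptree_count k ^ j \<le> ptree_count (j * Suc k)"
proof (induction j rule: nat_induct_at_least)
  case base
  then show ?case
    using ptree_count_le_Suc by simp
next
  case (Suc j)
  have "ptree_count k ^ Suc j \<le> ptree_count k * ptree_count (j * Suc k)"
    using Suc.IH by simp
  also have "\<dots> \<le> ptree_count (Suc (k + j * Suc k))"
  proof (rule ptree_count_mult_le)
    have "k \<le> j * k" "1 \<le> j"
      using Suc.hyps by simp_all
    then show "k < j * Suc k"
      unfolding mult_Suc_right by linarith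
  qed
  also have "Suc (k + j * Suc k) = Suc j * Suc k"
    by simp
  finally show ?case .
qed

(* If f k * r^(k+1) > 1, the terms f (j(k+1)) * r^(j(k+1)) >= (f k * r^(k+1))^j would not tend to 0. *)
lemma coeff_bound_inside_conv_radius:
  fixes f :: "nat \<Rightarrow> real"
  assumes pow: "\<And>j. 1 \<le> j \<Longrightarrow> f k ^ j \<le> f (j * Suc k)"
    and r: "0 < r" "ereal r < conv_radius f"
  shows "f k * r ^ Suc k \<le> 1"
proof (rule ccontr)
  assume "\<not> ?thesis"
  then have gt1: "1 < f k * r ^ Suc k"
    by simp
  have "(\<lambda>n. f n * r ^ n) \<longlonglongrightarrow> 0"
    using r by (intro summable_LIMSEQ_zero summable_in_conv_radius) simp
  then obtain N where N: "\<And>n. N \<le> n \<Longrightarrow> \<bar>f n * r ^ n\<bar> < 1"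
    using LIMSEQ_D[OF _ zero_less_one] by fastforce
  have "1 \<le> (f k * r ^ Suc k) ^ Suc N"
    using gt1 by (intro one_le_power) linarith
  also have "\<dots> = f k ^ Suc N * r ^ (Suc N * Suc k)"
    by (simp only: power_mult_distrib mult.commute[of "Suc N" "Suc k"] power_mult)
  also have "\<dots> \<le> f (Suc N * Suc k) * r ^ (Suc N * Suc k)"
    using pow[of "Suc N"] r by (intro mult_right_mono) auto
  also have "\<dots> < 1"
    using N[of "Suc N * Suc k"] by simp
  finally show False
    by simp
qed

lemma coeff_bound_at_conv_radius:
  fixes f :: "nat \<Rightarrow> real"
  assumes pow: "\<And>j. 1 \<le> j \<Longrightarrow> f k ^ j \<le> f (j * Suc k)"
    and R: "conv_radius f = ereal R" "0 < R"
  shows "f k * R ^ Suc k \<le> 1"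
proof (rule tendsto_upperbound)
  show "((\<lambda>r. f k * r ^ Suc k) \<longlongrightarrow> f k * R ^ Suc k) (at_left R)"
    by (intro tendsto_intros)
  show "\<forall>\<^sub>F r in at_left R. f k * r ^ Suc k \<le> 1"
    using eventually_at_left_real[OF R(2)]
  proof eventually_elim
    case (elim r)
    then show ?case
      using R(1) by (intro coeff_bound_inside_conv_radius[OF pow]) auto
  qed
qed simp

lemma polya_sigma_nonneg: "0 \<le> polya_sigma"
  unfolding polya_sigma_def by (simp add: conv_radius_nonneg real_of_ereal_pos)

lemma ptree_count_le_sigma_power:
  assumes "0 < polya_sigma"
  shows "real (ptree_count k) * polya_sigma ^ Suc k \<le> 1"
proof (rule coeff_bound_at_conv_radius[OF _ _ assms])
  show "real (ptree_count k) ^ j \<le> real (ptree_count (j * Suc k))" if "1 \<le> j" for j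
    using ptree_count_power_le[OF that] by (metis of_nat_le_iff of_nat_power)
  show "conv_radius (\<lambda>n. real (ptree_count n)) = ereal polya_sigma"
    using assms unfolding polya_sigma_def by (cases "conv_radius (\<lambda>n. real (ptree_count n))") auto
qed

lemma sum_group_psize_less:
  "(\<Sum>t | real (psize t) < X. g t) = (\<Sum>k | real k < X. \<Sum>t | psize t = k. g t)"
proof -
  have "psize t \<in> {..<nat \<lceil>X\<rceil>}" if "real (psize t) < X" for t
    using that unfolding Collect_of_nat_less_eq_lessThan[symmetric] by simp
  then have "{t. real (psize t) < X} \<subseteq> {t. psize t \<le> nat \<lceil>X\<rceil>}"
    by (auto intro: less_imp_le_nat)
  then have "finite {t. real (psize t) < X}"
    using finite_psize_le finite_subset by blast
  then have "(\<Sum>k | real k < X. \<Sum>t\<in>{t\<in>{t. real (psize t) < X}. psize t = k}. g t) = (\<Sum>t | real (psize t) < X. g t)"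
    by (intro sum.group finite_Collect_of_nat_less) auto
  moreover have "{t\<in>{t. real (psize t) < X}. psize t = k} = {t. psize t = k}" if "real k < X" for k
    using that by auto
  ultimately show ?thesis
    by simp
qed

section \<open>Fringe subtrees of a given shape\<close>

definition fringe_shape_prob :: "ptree \<Rightarrow> nat \<Rightarrow> real" where
  "fringe_shape_prob t n = 1 - S_coeff t n / T_coeff n"

lemma psize_shape: "psize (shape s) = lsize s"
  by (induction s) (auto simp: image_mset.compositionality o_def intro!: arg_cong[where f=sum_mset] image_mset_cong)

lemma fringe_shape_prob_eq:
  assumes "1 \<le> n"
  shows "fringe_shape_prob t n = card {r\<in>recursive_trees n. has_fringe_shape t r} / card (recursive_trees n)"
proof -
  let ?H = "{r\<in>recursive_trees n. has_fringe_shape t r}"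
  let ?N = "{r\<in>recursive_trees n. \<not> has_fringe_shape t r}"
  let ?C = "real (card (recursive_trees n))"
  have "card (recursive_trees n) = card ?H + card ?N"
    using finite_recursive_trees[of n] by (subst card_Un_disjoint[symmetric]) (auto intro: arg_cong[where f=card])
  then have C: "?C - card ?N = card ?H"
    by simp
  have "0 < ?C"
    using card_recursive_trees[OF assms] by simp
  have "S_coeff t n / T_coeff n = card ?N / ?C"
    by (simp add: S_coeff_def T_coeff_def egf_coeff_def)
  then have "fringe_shape_prob t n = (?C - card ?N) / ?C"
    using \<open>0 < ?C\<close> by (simp add: fringe_shape_prob_def diff_divide_distrib)
  then show ?thesis
    unfolding C .
qed

lemma fringe_shape_prob_nonneg: "1 \<le> n \<Longrightarrow> 0 \<le> fringe_shape_prob t n"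
  by (simp add: fringe_shape_prob_eq)

lemma fringe_shape_prob_le_1:
  assumes "1 \<le> n"
  shows "fringe_shape_prob t n \<le> 1"
proof -
  have "card {r\<in>recursive_trees n. has_fringe_shape t r} \<le> card (recursive_trees n)"
    using finite_recursive_trees by (intro card_mono) auto
  moreover have "0 < card (recursive_trees n)"
    using card_recursive_trees[OF assms] by simp
  ultimately show ?thesis
    using assms by (simp add: fringe_shape_prob_eq divide_le_eq_1)
qed

lemma sum_card_has_fringe_shape_le:
  "(\<Sum>t | psize t = k. card {r\<in>recursive_trees n. has_fringe_shape t r}) \<le> total_fringe_count n k"
proof -
  have "(\<Sum>t | psize t = k. card {r\<in>recursive_trees n. has_fringe_shape t r})
      = (\<Sum>r\<in>recursive_trees n. card {t\<in>{t. psize t = k}. has_fringe_shape t r})"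
    using finite_psize_eq finite_recursive_trees by (intro sum_card_filter_swap)
  also have "\<dots> \<le> (\<Sum>r\<in>recursive_trees n. fringe_count k r)"
  proof (rule sum_mono)
    fix r
    have "{t\<in>{t. psize t = k}. has_fringe_shape t r} \<subseteq> shape ` {s\<in>fringe r. lsize s = k}"
      unfolding has_fringe_shape_def using psize_shape by fastforce
    then have "card {t\<in>{t. psize t = k}. has_fringe_shape t r} \<le> card (shape ` {s\<in>fringe r. lsize s = k})"
      using finite_fringe by (intro card_mono) auto
    also have "\<dots> \<le> fringe_count k r"
      unfolding fringe_count_def using finite_fringe by (intro card_image_le) auto
    finally show "card {t\<in>{t. psize t = k}. has_fringe_shape t r} \<le> fringe_count k r" .
  qed
  finally show ?thesis
    unfolding total_fringe_count_def .
qed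

lemma sum_fringe_shape_prob_le_mean:
  assumes "1 \<le> n"
  shows "(\<Sum>t | psize t = k. fringe_shape_prob t n) \<le> mean_fringe_count n k"
proof -
  have pos: "0 < real (card (recursive_trees n))"
    using card_recursive_trees[OF assms] by simp
  have "(\<Sum>t | psize t = k. fringe_shape_prob t n)
      = real (\<Sum>t | psize t = k. card {r\<in>recursive_trees n. has_fringe_shape t r}) / card (recursive_trees n)"
    using assms by (simp add: fringe_shape_prob_eq sum_divide_distrib)
  also have "\<dots> \<le> real (total_fringe_count n k) / card (recursive_trees n)"
    by (intro divide_right_mono) (simp_all only: of_nat_le_iff sum_card_has_fringe_shape_le of_nat_0_le_iff)
  also have "\<dots> \<le> mean_fringe_count n k"
    using total_fringe_count_le[OF assms] pos by (simp add: divide_le_eq)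
  finally show ?thesis .
qed

lemma sum_fringe_shape_prob_le_ptree_count:
  "1 \<le> n \<Longrightarrow> (\<Sum>t | psize t = k. fringe_shape_prob t n) \<le> ptree_count k"
  using sum_mono[of "{t. psize t = k}" "\<lambda>t. fringe_shape_prob t n" "\<lambda>_. 1"] fringe_shape_prob_le_1 by simp

section \<open>Fringe subtrees of small shapes\<close>

lemma log_of_nat_nonpos:
  assumes "0 \<le> b" "b \<le> 1"
  shows "log b (real n) \<le> 0"
proof -
  have "ln b \<le> 0"
    using assms by (cases "b = 0") simp_all
  moreover have "0 \<le> ln (real n)"
    by (cases "n = 0") simp_all
  ultimately show ?thesis
    by (simp add: log_def divide_nonneg_nonpos)
qed

lemma sum_fringe_shape_prob_le:
  fixes b :: real
  assumes b: "1 < b" and count: "\<And>k. real (ptree_count k) \<le> b ^ (k + 1)"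
    and n: "1 \<le> n" "2 \<le> log b n" "log b n \<le> n"
  shows "(\<Sum>t\<in>{t. psize t \<le> n \<and> real (psize t) < log b n}. fringe_shape_prob t n)
    \<le> b\<^sup>2 / (b - 1) * sqrt n
       + (b powr (1/4))\<^sup>2 / (b powr (1/4) - 1) * 4 powr (3/4) * (n / log b n powr (3/2))"
proof -
  define h where "h k = (\<Sum>t | psize t = k. fringe_shape_prob t n)" for k
  have "{t. psize t \<le> n \<and> real (psize t) < log b n} = {t. real (psize t) < log b n}"
    using n(3) by auto
  then have "(\<Sum>t\<in>{t. psize t \<le> n \<and> real (psize t) < log b n}. fringe_shape_prob t n)
      = (\<Sum>k | real k < log b n. h k)"
    by (simp add: sum_group_psize_less h_def)
  also have "\<dots> \<le> b\<^sup>2 / (b - 1) * sqrt n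
       + (b powr (1/4))\<^sup>2 / (b powr (1/4) - 1) * 4 powr (3/4) * (n / log b n powr (3/2))"
  proof (rule sum_less_log_le[OF b n(2)])
    show "0 \<le> h k" for k
      unfolding h_def using n(1) by (intro sum_nonneg fringe_shape_prob_nonneg)
    show "h k \<le> b ^ (k + 1)" for k
      unfolding h_def using n(1) sum_fringe_shape_prob_le_ptree_count count order.trans by blast
    show "h k \<le> n / (real k * (real k + 1))" if "1 \<le> k" "real k < log b n" for k
      using that n(3) sum_fringe_shape_prob_le_mean[OF n(1), of k] by (simp add: h_def mean_fringe_count_def)
  qed
  finally show ?thesis .
qed

lemma sum_fringe_shape_prob_bigo:
  fixes b :: real
  assumes b: "1 < b" and count: "\<And>k. real (ptree_count k) \<le> b ^ (k + 1)"
  shows "(\<lambda>n. \<Sum>t\<in>{t. psize t \<le> n \<and> real (psize t) < log b n}. fringe_shape_prob t n)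
    \<in> O(\<lambda>n. n / log b n powr (3/2))"
proof -
  define A where "A = b\<^sup>2 / (b - 1)"
  define B where "B = (b powr (1/4))\<^sup>2 / (b powr (1/4) - 1) * 4 powr (3/4)"
  have "1 < b powr (1/4)"
    using b by simp
  then have AB: "0 < A" "0 < B"
    using b by (simp_all add: A_def B_def)
  have "\<forall>\<^sub>F n in at_top. 1 \<le> (n::nat)"
    by (rule eventually_ge_at_top)
  moreover have "\<forall>\<^sub>F n in at_top. 2 \<le> log b (real n)"
    using b by real_asymp
  moreover have "\<forall>\<^sub>F n in at_top. log b (real n) \<le> real n"
    using b by real_asymp
  ultimately have "\<forall>\<^sub>F n in at_top. norm (\<Sum>t\<in>{t. psize t \<le> n \<and> real (psize t) < log b n}. fringe_shape_prob t n)
      \<le> 1 * norm (A * sqrt n + B * (n / log b n powr (3/2)))"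
  proof eventually_elim
    case (elim n)
    have "0 \<le> (\<Sum>t\<in>{t. psize t \<le> n \<and> real (psize t) < log b n}. fringe_shape_prob t n)"
      using elim(1) by (intro sum_nonneg fringe_shape_prob_nonneg)
    moreover have "0 \<le> A * sqrt n + B * (n / log b n powr (3/2))"
      using AB by (intro add_nonneg_nonneg mult_nonneg_nonneg divide_nonneg_nonneg) simp_all
    moreover have "(\<Sum>t\<in>{t. psize t \<le> n \<and> real (psize t) < log b n}. fringe_shape_prob t n)
        \<le> A * sqrt n + B * (n / log b n powr (3/2))"
      unfolding A_def B_def using sum_fringe_shape_prob_le[OF b count elim] by (simp add: mult.assoc)
    ultimately show ?case
      by simp
  qed
  then have "(\<lambda>n. \<Sum>t\<in>{t. psize t \<le> n \<and> real (psize t) < log b n}. fringe_shape_prob t n)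
      \<in> O(\<lambda>n. A * sqrt n + B * (n / log b n powr (3/2)))"
    by (rule bigoI)
  also have "(\<lambda>n::nat. A * sqrt n + B * (n / log b n powr (3/2))) \<in> O(\<lambda>n. n / log b n powr (3/2))"
  proof -
    have "(\<lambda>n::nat. sqrt n) \<in> O(\<lambda>n. n / log b n powr (3/2))"
      using b by real_asymp
    then have "(\<lambda>n::nat. A * sqrt n) \<in> O(\<lambda>n. n / log b n powr (3/2))"
      using AB by simp
    moreover have "(\<lambda>n::nat. B * (n / log b n powr (3/2))) \<in> O(\<lambda>n. n / log b n powr (3/2))"
      using AB by (subst landau_o.big.cmult_in_iff) simp_all
    ultimately show ?thesis
      by (rule sum_in_bigo)
  qed
  finally show ?thesis .
qed

theorem proposition2p6:
  shows "(\<lambda>n::nat. \<Sum>t\<in>{t. psize t \<le> n \<and> real (psize t) < log (1 / polya_sigma) (real n)}.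
            1 - S_coeff t n / T_coeff n)
         \<in> O(\<lambda>n::nat. real n / (log (1 / polya_sigma) (real n)) powr (3/2))"
proof (cases "1 < 1 / polya_sigma")
  case True
  then have "0 < polya_sigma"
    using polya_sigma_nonneg by (cases "polya_sigma = 0") auto
  then have "real (ptree_count k) \<le> (1 / polya_sigma) ^ (k + 1)" for k
    using ptree_count_le_sigma_power[of k] by (simp add: field_simps)
  with True show ?thesis
    unfolding fringe_shape_prob_def[symmetric] by (rule sum_fringe_shape_prob_bigo)
next
  case False
  \<comment> \<open>This means sigma = 0 (where 1 / 0 = 0) or sigma >= 1; then no tree is small enough.\<close>
  then have "log (1 / polya_sigma) (real n) \<le> 0" for n
    using polya_sigma_nonneg by (intro log_of_nat_nonpos) simp_all
  then have empty: "{t. psize t \<le> n \<and> real (psize t) < log (1 / polya_sigma) (real n)} = {}" for n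
    by (smt (verit) empty_Collect_eq of_nat_0_le_iff)
  show ?thesis
    unfolding empty sum.empty by simp
qed

end
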